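(* Let $V$ be a real Hilbert space, let $W\subset V$ be a subspace of finite dimension $m$, and let $P_W$ denote the orthogonal projection onto $W$. A map $A:W\to V$ has the form $A(w)=w+B(w)$ for all $w\in W$, with $B:W\to W^\perp$ affine, if and only if there exist $\bar u\in V$ and a linear subspace $V_n\subset V$ of dimension $n\le m$ with $V_n\cap W^\perp=\{0\}$ such that $A$ coincides with the affine PBDW algorithm for $\bar u+V_n$, namely $$A(w)=\operatorname{argmin}\{\operatorname{dist}(v,\bar u+V_n)\;:\; v\in w+W^\perp\}\quad\text{for all } w\in W.$$
   Context: $W^\perp$ is the orthogonal complement of $W$ in $V$, and $\operatorname{dist}(v,S)=\inf_{s\in S}\|v-s\|$. The condition $V_n\cap W^\perp=\{0\}$ guarantees that the minimizer in the definition of the affine PBDW algorithm exists and is unique. *)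

theory Defs
  imports "HOL-Analysis.Analysis"
begin

definition fin_dim_subspace :: "'a::real_vector set \<Rightarrow> bool" where
  "fin_dim_subspace S \<longleftrightarrow> subspace S \<and> (\<exists>B. finite B \<and> S = span B)"

definition affine_map_on :: "'a::real_vector set \<Rightarrow> ('a \<Rightarrow> 'b::real_vector) \<Rightarrow> bool" where
  "affine_map_on S f \<longleftrightarrow>
     (\<forall>x\<in>S. \<forall>y\<in>S. \<forall>t::real. f (t *\<^sub>R x + (1 - t) *\<^sub>R y) = t *\<^sub>R f x + (1 - t) *\<^sub>R f y)"

definition affine_pbdw :: "'a::real_inner set \<Rightarrow> 'a \<Rightarrow> 'a set \<Rightarrow> 'a \<Rightarrow> 'a" where
  "affine_pbdw W ubar Vn w =
     (ARG_MIN (\<lambda>v. infdist v ((+) ubar ` Vn)) v. v \<in> (+) w ` (W\<^sup>\<bottom>))"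

end

theory Submission
  imports Defs
begin

text \<open>Let \<open>P\<close> be the orthogonal projection onto \<open>W\<close>, which exists since \<open>W\<close> is finite-dimensional.
If \<open>A = id + B\<close> with \<open>B = B 0 + L\<close> affine into \<open>W\<^sup>\<bottom>\<close>, take \<open>ubar = B 0\<close> and
\<open>Vn = (id + L) W\<close>: the fibre \<open>w + W\<^sup>\<bottom>\<close> meets \<open>ubar + Vn\<close> in the single point \<open>A w\<close>, because
\<open>Vn \<inter> W\<^sup>\<bottom> = {0}\<close>, so \<open>A w\<close> is the unique point of the fibre at distance zero.
Conversely, for \<open>v\<close> in the fibre and \<open>y \<in> Vn\<close>, Pythagoras splits \<open>\<parallel>v - ubar - y\<parallel>\<^sup>2\<close> into
\<open>\<parallel>w - P ubar - P y\<parallel>\<^sup>2 + \<parallel>(I - P)(v - ubar - y)\<parallel>\<^sup>2\<close>. The first term is minimised by the unique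
\<open>x \<in> Vn\<close> (\<open>P\<close> is injective on \<open>Vn\<close>) for which \<open>P x\<close> is the projection of \<open>w - P ubar\<close> onto
\<open>P Vn\<close>, the second vanishes only for \<open>v = w + (I - P)(ubar + x)\<close>, and both depend affinely on \<open>w\<close>.\<close>

lemma orthogonal_comp_orthogonal:
  assumes "y \<in> S" "z \<in> S\<^sup>\<bottom>"
  shows "orthogonal y z"
  using assms by (simp add: orthogonal_comp_def)

lemma orthogonal_decomposition_span:
  fixes S :: "'a::real_inner set"
  assumes "finite S"
  shows "\<exists>p\<in>span S. x - p \<in> (span S)\<^sup>\<bottom>"
  using assms
proof (induction S arbitrary: x rule: finite_induct)
  case empty
  then show ?case by (simp add: span_zero)
next
  case (insert a S)
  have sub: "span S \<subseteq> span (insert a S)"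
    by (simp add: span_mono subset_insertI)
  obtain pa where pa: "pa \<in> span S" "a - pa \<in> (span S)\<^sup>\<bottom>"
    using insert.IH by blast
  obtain px where px: "px \<in> span S" "x - px \<in> (span S)\<^sup>\<bottom>"
    using insert.IH by blast
  define a' where "a' = a - pa"
  define c where "c = inner (x - px) a' / inner a' a'"
  define p where "p = px + c *\<^sub>R a'"
  have a'S: "inner y a' = 0" and xS: "inner y (x - px) = 0" if "y \<in> span S" for y
    using that pa(2) px(2) by (auto simp: a'_def orthogonal_comp_def orthogonal_def)
  have "a' \<in> span (insert a S)"
    unfolding a'_def using pa(1) sub by (meson span_base insertI1 span_diff subsetD)
  then have p_span: "p \<in> span (insert a S)"
    unfolding p_def using px(1) sub by (meson span_add span_scale subsetD)
  have "inner (x - p) a' = inner (x - px) a' - c * inner a' a'"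
    by (simp add: p_def inner_diff_left inner_add_left)
  then have p_a': "inner (x - p) a' = 0"
    by (cases "inner a' a' = 0") (simp_all add: c_def)
  have p_S: "inner (x - p) y = 0" if "y \<in> span S" for y
    using a'S[OF that] xS[OF that]
    by (simp add: p_def inner_diff_left inner_commute algebra_simps)
  have "orthogonal (x - p) y" if "y \<in> insert a S" for y
  proof (cases "y = a")
    case True
    have "a = a' + pa" by (simp add: a'_def)
    then show ?thesis
      using True p_a' p_S[OF pa(1)] by (simp add: orthogonal_def inner_add_right)
  next
    case False
    then show ?thesis
      using that p_S[of y] span_base[of y S] by (simp add: orthogonal_def)
  qed
  then have "orthogonal (x - p) z" if "z \<in> span (insert a S)" for z
    using orthogonal_to_span[OF that] by blast
  then have "x - p \<in> (span (insert a S))\<^sup>\<bottom>"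
    by (simp add: orthogonal_comp_def orthogonal_commute)
  then show ?case using p_span by blast
qed

text \<open>A junk value unless \<open>S + S\<^sup>\<bottom>\<close> is the whole space, e.g. for finite-dimensional \<open>S\<close>.\<close>
definition orth_proj :: "'a::real_inner set \<Rightarrow> 'a \<Rightarrow> 'a" where
  "orth_proj S x = (SOME p. p \<in> S \<and> x - p \<in> S\<^sup>\<bottom>)"

lemma
  assumes "fin_dim_subspace S"
  shows orth_proj_in: "orth_proj S x \<in> S"
    and orth_proj_residual: "x - orth_proj S x \<in> S\<^sup>\<bottom>"
proof -
  obtain T where "finite T" "S = span T"
    using assms by (auto simp: fin_dim_subspace_def)
  then have "\<exists>p. p \<in> S \<and> x - p \<in> S\<^sup>\<bottom>"
    using orthogonal_decomposition_span by blast
  from someI_ex[OF this] show "orth_proj S x \<in> S" "x - orth_proj S x \<in> S\<^sup>\<bottom>"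
    by (simp_all add: orth_proj_def)
qed

lemma orth_proj_eqI:
  assumes S: "subspace S" and p: "p \<in> S" "x - p \<in> S\<^sup>\<bottom>"
  shows "orth_proj S x = p"
proof -
  let ?q = "orth_proj S x"
  have q: "?q \<in> S \<and> x - ?q \<in> S\<^sup>\<bottom>"
    unfolding orth_proj_def using p by (rule someI[of "\<lambda>p. p \<in> S \<and> x - p \<in> S\<^sup>\<bottom>", OF conjI])
  have "?q - p \<in> S\<^sup>\<bottom>"
    using subspace_diff[OF subspace_orthogonal_comp p(2) q[THEN conjunct2]] by simp
  moreover have "?q - p \<in> S"
    using q p(1) by (simp add: subspace_diff S)
  ultimately have "?q - p \<in> S \<inter> S\<^sup>\<bottom>"
    by simp
  then show ?thesis
    using orthogonal_Int_0[OF S] by simp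
qed

lemma orth_proj_id: "subspace S \<Longrightarrow> x \<in> S \<Longrightarrow> orth_proj S x = x"
  by (rule orth_proj_eqI) (simp_all add: subspace_0 subspace_orthogonal_comp)

lemma orth_proj_eq_0: "subspace S \<Longrightarrow> x \<in> S\<^sup>\<bottom> \<Longrightarrow> orth_proj S x = 0"
  by (rule orth_proj_eqI) (simp_all add: subspace_0)

lemma linear_orth_proj:
  assumes S: "fin_dim_subspace S"
  shows "linear (orth_proj S)"
proof (rule linearI)
  have sS: "subspace S" using S by (simp add: fin_dim_subspace_def)
  note P = orth_proj_in[OF S] orth_proj_residual[OF S]
  fix x y :: 'a and c :: real
  have "x + y - (orth_proj S x + orth_proj S y) = (x - orth_proj S x) + (y - orth_proj S y)"
    by simp
  also have "\<dots> \<in> S\<^sup>\<bottom>"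
    by (rule subspace_add[OF subspace_orthogonal_comp P(2) P(2)])
  finally show "orth_proj S (x + y) = orth_proj S x + orth_proj S y"
    by (rule orth_proj_eqI[OF sS subspace_add[OF sS P(1) P(1)]])
  have "c *\<^sub>R x - c *\<^sub>R orth_proj S x = c *\<^sub>R (x - orth_proj S x)"
    by (simp add: scaleR_diff_right)
  also have "\<dots> \<in> S\<^sup>\<bottom>"
    by (rule subspace_scale[OF subspace_orthogonal_comp P(2)])
  finally show "orth_proj S (c *\<^sub>R x) = c *\<^sub>R orth_proj S x"
    by (rule orth_proj_eqI[OF sS subspace_scale[OF sS P(1)]])
qed

lemma norm_orth_proj_Pythagorean:
  assumes "fin_dim_subspace S"
  shows "(norm x)\<^sup>2 = (norm (orth_proj S x))\<^sup>2 + (norm (x - orth_proj S x))\<^sup>2"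
proof -
  have "orthogonal (orth_proj S x) (x - orth_proj S x)"
    using orth_proj_in[OF assms] orth_proj_residual[OF assms] by (rule orthogonal_comp_orthogonal)
  then show ?thesis
    using norm_add_Pythagorean by fastforce
qed

lemma infdist_translated_subspace_attained:
  fixes S :: "'a::real_inner set"
  assumes S: "fin_dim_subspace S"
  shows "\<exists>p\<in>S. infdist v ((+) c ` S) = dist v (c + p)"
proof
  let ?p = "orth_proj S (v - c)"
  have le: "dist v (c + ?p) \<le> dist v a" if a: "a \<in> (+) c ` S" for a
  proof -
    obtain y where y: "y \<in> S" "a = c + y" using a by blast
    have "?p - y \<in> S"
      using y(1) orth_proj_in[OF S] S by (simp add: fin_dim_subspace_def subspace_diff)
    moreover have "v - (c + ?p) \<in> S\<^sup>\<bottom>"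
      using orth_proj_residual[OF S, of "v - c"] by (simp add: diff_diff_eq)
    ultimately have "orthogonal (v - (c + ?p)) (?p - y)"
      by (simp add: orthogonal_comp_orthogonal orthogonal_commute)
    moreover have "v - a = (v - (c + ?p)) + (?p - y)"
      using y(2) by simp
    ultimately have "(norm (v - a))\<^sup>2 = (norm (v - (c + ?p)))\<^sup>2 + (norm (?p - y))\<^sup>2"
      using norm_add_Pythagorean by metis
    then show ?thesis
      by (simp add: dist_norm power2_le_imp_le)
  qed
  have "0 \<in> S" using S by (simp add: fin_dim_subspace_def subspace_0)
  then have "(+) c ` S \<noteq> {}" by blast
  then have "dist v (c + ?p) \<le> infdist v ((+) c ` S)"
    using le by (simp add: infdist_notempty cINF_greatest)
  moreover have "infdist v ((+) c ` S) \<le> dist v (c + ?p)"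
    using orth_proj_in[OF S] by (intro infdist_le) blast
  ultimately show "infdist v ((+) c ` S) = dist v (c + ?p)" by linarith
  show "?p \<in> S" using orth_proj_in[OF S] .
qed

lemma fin_dim_subspace_linear_image:
  assumes "linear f" "fin_dim_subspace S"
  shows "fin_dim_subspace (f ` S)"
proof -
  obtain T where "finite T" "S = span T"
    using assms(2) by (auto simp: fin_dim_subspace_def)
  then show ?thesis
    using span_linear_image[OF assms(1)] linear_subspace_image[OF assms(1) subspace_span]
    by (auto simp: fin_dim_subspace_def)
qed

lemma dim_linear_image_le:
  assumes f: "linear f" and S: "fin_dim_subspace S"
  shows "dim (f ` S) \<le> dim S"
proof -
  obtain T where T: "finite T" "S = span T"
    using S by (auto simp: fin_dim_subspace_def)
  obtain B where B: "B \<subseteq> S" "independent B" "S \<subseteq> span B" "card B = dim S"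
    using basis_exists by blast
  have "finite B"
    using independent_span_bound[OF T(1) B(2)] B(1) T(2) by blast
  moreover have "f ` S \<subseteq> span (f ` B)"
    using B(3) span_linear_image[OF f] by blast
  ultimately have "dim (f ` S) \<le> card (f ` B)"
    by (simp add: dim_le_card)
  also have "\<dots> \<le> dim S"
    using card_image_le[OF \<open>finite B\<close>] B(4) by simp
  finally show ?thesis .
qed

lemma affine_pbdw_eqI:
  assumes "v \<in> (+) w ` (W\<^sup>\<bottom>)"
    and "\<And>v'. v' \<in> (+) w ` (W\<^sup>\<bottom>) \<Longrightarrow> infdist v ((+) ubar ` Vn) \<le> infdist v' ((+) ubar ` Vn)"
    and "\<And>v'. v' \<in> (+) w ` (W\<^sup>\<bottom>) \<Longrightarrow> infdist v' ((+) ubar ` Vn) \<le> infdist v ((+) ubar ` Vn)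
           \<Longrightarrow> v' = v"
  shows "affine_pbdw W ubar Vn w = v"
  unfolding affine_pbdw_def arg_min_def
proof (rule some_equality)
  show "is_arg_min (\<lambda>v. infdist v ((+) ubar ` Vn)) (\<lambda>v. v \<in> (+) w ` (W\<^sup>\<bottom>)) v"
    using assms(1,2) by (simp add: is_arg_min_linorder)
  show "y = v" if "is_arg_min (\<lambda>v. infdist v ((+) ubar ` Vn)) (\<lambda>v. v \<in> (+) w ` (W\<^sup>\<bottom>)) y" for y
    using that assms(1,3) by (simp add: is_arg_min_linorder)
qed

lemma affine_pbdw_eq_intersection:
  assumes Vn: "fin_dim_subspace Vn" and I: "Vn \<inter> W\<^sup>\<bottom> = {0}"
    and v: "v \<in> (+) w ` (W\<^sup>\<bottom>)" "v \<in> (+) ubar ` Vn"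
  shows "affine_pbdw W ubar Vn w = v"
proof (rule affine_pbdw_eqI[OF v(1)])
  have "infdist v ((+) ubar ` Vn) \<le> dist v v"
    using v(2) by (rule infdist_le)
  then have dist0: "infdist v ((+) ubar ` Vn) = 0"
    using infdist_nonneg[of v "(+) ubar ` Vn"] by simp
  show "infdist v ((+) ubar ` Vn) \<le> infdist v' ((+) ubar ` Vn)" for v'
    by (simp add: dist0 infdist_nonneg)
  fix v' assume v': "v' \<in> (+) w ` (W\<^sup>\<bottom>)" and "infdist v' ((+) ubar ` Vn) \<le> infdist v ((+) ubar ` Vn)"
  then have "infdist v' ((+) ubar ` Vn) = 0"
    using dist0 infdist_nonneg[of v' "(+) ubar ` Vn"] by linarith
  moreover obtain p where "p \<in> Vn" "infdist v' ((+) ubar ` Vn) = dist v' (ubar + p)"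
    using infdist_translated_subspace_attained[OF Vn] by blast
  ultimately have "p \<in> Vn" "v' = ubar + p"
    by simp_all
  moreover obtain q where "q \<in> Vn" "v = ubar + q"
    using v(2) by blast
  ultimately have "v' - v \<in> Vn"
    using Vn subspace_diff[of Vn p q] by (simp add: fin_dim_subspace_def)
  moreover have "v' - v \<in> W\<^sup>\<bottom>"
  proof -
    obtain z' z where "z' \<in> W\<^sup>\<bottom>" "v' = w + z'" "z \<in> W\<^sup>\<bottom>" "v = w + z"
      using v' v(1) by blast
    then show ?thesis
      using subspace_diff[OF subspace_orthogonal_comp] by simp
  qed
  ultimately have "v' - v \<in> Vn \<inter> W\<^sup>\<bottom>"
    by blast
  then show "v' = v"
    using I by simp
qed

lemma affine_map_on_linear_plus_const:
  assumes L: "linear L"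
  shows "affine_map_on S (\<lambda>x. c + L x)"
  unfolding affine_map_on_def
proof (intro ballI allI)
  fix x y and t :: real
  have "c + L (t *\<^sub>R x + (1 - t) *\<^sub>R y) = c + (t *\<^sub>R L x + (1 - t) *\<^sub>R L y)"
    using linear_add[OF L] linear_scale[OF L] by simp
  also have "\<dots> = t *\<^sub>R (c + L x) + (1 - t) *\<^sub>R (c + L y)"
    by (simp add: algebra_simps)
  finally show "c + L (t *\<^sub>R x + (1 - t) *\<^sub>R y) = t *\<^sub>R (c + L x) + (1 - t) *\<^sub>R (c + L y)" .
qed

lemma affine_map_on_linear_part:
  fixes W :: "'a::real_inner set" and B :: "'a \<Rightarrow> 'b::real_vector"
  assumes W: "fin_dim_subspace W" and B: "affine_map_on W B"
  obtains L where "linear L" "\<And>w. w \<in> W \<Longrightarrow> B w = B 0 + L w"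
proof
  have sW: "subspace W" using W by (simp add: fin_dim_subspace_def)
  then have W0: "0 \<in> W" by (rule subspace_0)
  define L where "L x = B x - B 0" for x
  have L_scale: "L (c *\<^sub>R x) = c *\<^sub>R L x" if "x \<in> W" for c x
  proof -
    have "B (c *\<^sub>R x + (1 - c) *\<^sub>R 0) = c *\<^sub>R B x + (1 - c) *\<^sub>R B 0"
      using B that W0 unfolding affine_map_on_def by blast
    then show ?thesis unfolding L_def by (simp add: algebra_simps)
  qed
  have L_add: "L (x + y) = L x + L y" if "x \<in> W" "y \<in> W" for x y
  proof -
    have "2 *\<^sub>R x \<in> W" "2 *\<^sub>R y \<in> W"
      using that sW subspace_scale by blast+
    then have "B ((1/2) *\<^sub>R (2 *\<^sub>R x) + (1 - 1/2) *\<^sub>R (2 *\<^sub>R y))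
        = (1/2) *\<^sub>R B (2 *\<^sub>R x) + (1 - 1/2) *\<^sub>R B (2 *\<^sub>R y)"
      using B unfolding affine_map_on_def by blast
    then have "B (x + y) = (1/2) *\<^sub>R B (2 *\<^sub>R x) + (1/2) *\<^sub>R B (2 *\<^sub>R y)"
      by simp
    moreover have "B (2 *\<^sub>R x) = B 0 + 2 *\<^sub>R L x" "B (2 *\<^sub>R y) = B 0 + 2 *\<^sub>R L y"
      using L_scale[OF that(1), of 2] L_scale[OF that(2), of 2]
      unfolding L_def by (simp_all add: algebra_simps)
    moreover have "(1/2) *\<^sub>R B 0 + (1/2) *\<^sub>R B 0 = B 0"
      by (simp flip: scaleR_add_left)
    ultimately show ?thesis
      unfolding L_def by (simp add: algebra_simps)
  qed
  note P = linear_orth_proj[OF W] orth_proj_in[OF W]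
  \<comment> \<open>\<open>L\<close> is only known to be linear on \<open>W\<close>; precomposing with the projection extends it.\<close>
  show "linear (\<lambda>x. L (orth_proj W x))"
    by (rule linearI) (simp_all add: linear_add[OF P(1)] linear_scale[OF P(1)] L_add L_scale P(2))
  show "B w = B 0 + L (orth_proj W w)" if "w \<in> W" for w
    using orth_proj_id[OF sW that] by (simp add: L_def)
qed

lemma affine_orthogonal_correction_is_affine_pbdw:
  fixes W :: "'a::real_inner set" and B :: "'a \<Rightarrow> 'a"
  assumes W: "fin_dim_subspace W" and B: "affine_map_on W B"
    and BW: "\<And>w. w \<in> W \<Longrightarrow> B w \<in> W\<^sup>\<bottom>"
  obtains Vn where "fin_dim_subspace Vn" "dim Vn \<le> dim W" "Vn \<inter> W\<^sup>\<bottom> = {0}"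
    "\<And>w. w \<in> W \<Longrightarrow> affine_pbdw W (B 0) Vn w = w + B w"
proof -
  have sW: "subspace W" using W by (simp add: fin_dim_subspace_def)
  then have W0: "0 \<in> W" by (rule subspace_0)
  obtain L where L: "linear L" "\<And>w. w \<in> W \<Longrightarrow> B w = B 0 + L w"
    using affine_map_on_linear_part[OF W B] by blast
  have LW: "L w \<in> W\<^sup>\<bottom>" if "w \<in> W" for w
    using subspace_diff[OF subspace_orthogonal_comp BW[OF that] BW[OF W0]] L(2)[OF that] by simp
  define g where "g x = x + L x" for x
  have g: "linear g"
    unfolding g_def by (intro linear_compose_add linear_ident L(1))
  have Vn: "fin_dim_subspace (g ` W)"
    using fin_dim_subspace_linear_image[OF g W] .
  have I: "g ` W \<inter> W\<^sup>\<bottom> = {0}"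
  proof
    show "g ` W \<inter> W\<^sup>\<bottom> \<subseteq> {0}"
    proof
      fix u assume "u \<in> g ` W \<inter> W\<^sup>\<bottom>"
      then obtain w where w: "w \<in> W" "u = w + L w" "u \<in> W\<^sup>\<bottom>"
        by (auto simp: g_def)
      then have "w \<in> W\<^sup>\<bottom>"
        using subspace_diff[OF subspace_orthogonal_comp w(3) LW[OF w(1)]] by simp
      then have "w = 0"
        using w(1) orthogonal_Int_0[OF sW] by blast
      then show "u \<in> {0}"
        using w(2) linear_0[OF L(1)] by simp
    qed
    show "{0} \<subseteq> g ` W \<inter> W\<^sup>\<bottom>"
      using W0 linear_0[OF g] subspace_0[OF subspace_orthogonal_comp] by force
  qed
  have "affine_pbdw W (B 0) (g ` W) w = w + B w" if w: "w \<in> W" for w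
  proof (rule affine_pbdw_eq_intersection[OF Vn I])
    show "w + B w \<in> (+) w ` (W\<^sup>\<bottom>)"
      using BW[OF w] by blast
    show "w + B w \<in> (+) (B 0) ` (g ` W)"
      using w L(2)[OF w] by (force simp: g_def)
  qed
  then show ?thesis
    using that[OF Vn dim_linear_image_le[OF g W] I] by blast
qed

lemma norm_residual_Pythagorean:
  fixes W Vn :: "'a::real_inner set"
  assumes W: "fin_dim_subspace W" and Vn: "subspace Vn" and xy: "x \<in> Vn" "y \<in> Vn"
    and opt: "orth_proj W v - orth_proj W u - orth_proj W x \<in> (orth_proj W ` Vn)\<^sup>\<bottom>"
  shows "(norm (v - (u + y)))\<^sup>2 = (norm (orth_proj W v - orth_proj W u - orth_proj W x))\<^sup>2
      + (norm (orth_proj W (x - y)))\<^sup>2 + (norm (v - (u + y) - orth_proj W (v - (u + y))))\<^sup>2"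
proof -
  let ?r = "orth_proj W v - orth_proj W u - orth_proj W x"
  have P: "linear (orth_proj W)"
    using W by (rule linear_orth_proj)
  have "orth_proj W (v - (u + y)) = ?r + orth_proj W (x - y)"
    by (simp add: linear_diff[OF P] linear_add[OF P])
  moreover have "orthogonal ?r (orth_proj W (x - y))"
    using orthogonal_comp_orthogonal[OF _ opt] subspace_diff[OF Vn xy] orthogonal_commute by blast
  ultimately show ?thesis
    using norm_orth_proj_Pythagorean[OF W, of "v - (u + y)"] norm_add_Pythagorean by simp
qed

lemma pbdw_residual_bound:
  fixes W Vn :: "'a::real_inner set"
  assumes W: "fin_dim_subspace W" and Vn: "subspace Vn" and I: "Vn \<inter> W\<^sup>\<bottom> = {0}"
    and w: "w \<in> W" and x: "x \<in> Vn" and y: "y \<in> Vn" and v: "v \<in> (+) w ` (W\<^sup>\<bottom>)"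
    and opt: "w - orth_proj W ubar - orth_proj W x \<in> (orth_proj W ` Vn)\<^sup>\<bottom>"
  shows "norm (w - orth_proj W ubar - orth_proj W x) \<le> norm (v - (ubar + y))"
    and "norm (v - (ubar + y)) \<le> norm (w - orth_proj W ubar - orth_proj W x)
      \<Longrightarrow> v = w + (ubar + x - orth_proj W (ubar + x))"
proof -
  let ?P = "orth_proj W" and ?r = "w - orth_proj W ubar - orth_proj W x"
  let ?e = "v - (ubar + y)"
  have sW: "subspace W"
    using W by (simp add: fin_dim_subspace_def)
  have P: "linear ?P"
    using W by (rule linear_orth_proj)
  have Pv: "?P v = w"
    using v orth_proj_id[OF sW w] orth_proj_eq_0[OF sW] linear_add[OF P] by auto
  have split: "(norm ?e)\<^sup>2 = (norm ?r)\<^sup>2 + (norm (?P (x - y)))\<^sup>2 + (norm (?e - ?P ?e))\<^sup>2"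
    using norm_residual_Pythagorean[OF W Vn x y] opt Pv by simp
  then have "(norm ?r)\<^sup>2 \<le> (norm ?e)\<^sup>2"
    using zero_le_power2[of "norm (?P (x - y))"] zero_le_power2[of "norm (?e - ?P ?e)"]
    by linarith
  then show "norm ?r \<le> norm ?e"
    using norm_ge_zero by (rule power2_le_imp_le)
  assume "norm ?e \<le> norm ?r"
  then have "(norm ?e)\<^sup>2 \<le> (norm ?r)\<^sup>2"
    using norm_ge_zero by (rule power_mono)
  then have "(norm (?P (x - y)))\<^sup>2 = 0" "(norm (?e - ?P ?e))\<^sup>2 = 0"
    using split zero_le_power2[of "norm (?P (x - y))"] zero_le_power2[of "norm (?e - ?P ?e)"]
    by linarith+
  then have Pxy: "?P (x - y) = 0" and e: "?e = ?P ?e"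
    by simp_all
  have "x - y \<in> Vn \<inter> W\<^sup>\<bottom>"
    using orth_proj_residual[OF W, of "x - y"] subspace_diff[OF Vn x y] Pxy by simp
  then have "y = x"
    using I by simp
  then have "v - (ubar + x) = ?r"
    using e Pv by (simp add: linear_diff[OF P] linear_add[OF P])
  also have "?r = w + (ubar + x - ?P (ubar + x)) - (ubar + x)"
    by (simp add: linear_add[OF P])
  finally show "v = w + (ubar + x - ?P (ubar + x))"
    by (metis diff_add_cancel)
qed

lemma affine_pbdw_eq_projection_formula:
  fixes W Vn :: "'a::real_inner set"
  assumes W: "fin_dim_subspace W" and Vn: "fin_dim_subspace Vn" and I: "Vn \<inter> W\<^sup>\<bottom> = {0}"
    and w: "w \<in> W" and x: "x \<in> Vn"
    and opt: "w - orth_proj W ubar - orth_proj W x \<in> (orth_proj W ` Vn)\<^sup>\<bottom>"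
  shows "affine_pbdw W ubar Vn w = w + (ubar + x - orth_proj W (ubar + x))"
proof -
  let ?K = "(+) ubar ` Vn" and ?r = "w - orth_proj W ubar - orth_proj W x"
  let ?v = "w + (ubar + x - orth_proj W (ubar + x))"
  have sV: "subspace Vn"
    using Vn by (simp add: fin_dim_subspace_def)
  note bound = pbdw_residual_bound[OF W sV I w x _ _ opt]
  have attained: "\<exists>y\<in>Vn. infdist v ?K = norm (v - (ubar + y))" for v
    using infdist_translated_subspace_attained[OF Vn] by (simp add: dist_norm)
  have v_fibre: "?v \<in> (+) w ` (W\<^sup>\<bottom>)"
    using orth_proj_residual[OF W] by blast
  have v_res: "?v - (ubar + x) = ?r"
    using linear_add[OF linear_orth_proj[OF W]] by simp
  have "infdist ?v ?K \<le> dist ?v (ubar + x)"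
    using x by (intro infdist_le) blast
  then have v_dist: "infdist ?v ?K \<le> norm ?r"
    by (simp only: dist_norm v_res)
  show ?thesis
  proof (rule affine_pbdw_eqI[OF v_fibre])
    fix v assume "v \<in> (+) w ` (W\<^sup>\<bottom>)"
    then show "infdist ?v ?K \<le> infdist v ?K"
      using attained[of v] bound(1) v_dist by fastforce
  next
    fix v assume "v \<in> (+) w ` (W\<^sup>\<bottom>)" and "infdist v ?K \<le> infdist ?v ?K"
    then show "v = ?v"
      using attained[of v] bound(2) v_dist by fastforce
  qed
qed

lemma orth_proj_left_inverse_on:
  fixes W Vn :: "'a::real_inner set"
  assumes W: "fin_dim_subspace W" and Vn: "subspace Vn" and I: "Vn \<inter> W\<^sup>\<bottom> = {0}"
  obtains G where "linear G" "\<And>y. G y \<in> Vn" "\<And>x. x \<in> Vn \<Longrightarrow> G (orth_proj W x) = x"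
proof -
  have P: "linear (orth_proj W)"
    using W by (rule linear_orth_proj)
  have span: "span Vn = Vn"
    using Vn by simp
  have "inj_on (orth_proj W) (span Vn)"
  proof (rule inj_onI)
    fix x y assume "x \<in> span Vn" "y \<in> span Vn" "orth_proj W x = orth_proj W y"
    then have "x - y \<in> Vn" "orth_proj W (x - y) = 0"
      using Vn by (simp_all add: span subspace_diff linear_diff[OF P])
    then have "x - y \<in> Vn \<inter> W\<^sup>\<bottom>"
      using orth_proj_residual[OF W, of "x - y"] by simp
    then show "x = y"
      using I by simp
  qed
  from linear_inj_on_left_inverse[OF P this] that show ?thesis
    unfolding span by auto
qed

lemma affine_pbdw_coefficient:
  fixes W Vn :: "'a::real_inner set"
  assumes W: "fin_dim_subspace W" and Vn: "fin_dim_subspace Vn" and I: "Vn \<inter> W\<^sup>\<bottom> = {0}"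
  obtains c H where "linear H" "\<And>w. c + H w \<in> Vn"
    "\<And>w. w - orth_proj W ubar - orth_proj W (c + H w) \<in> (orth_proj W ` Vn)\<^sup>\<bottom>"
proof -
  let ?P = "orth_proj W"
  define U where "U = ?P ` Vn"
  have U: "fin_dim_subspace U"
    unfolding U_def using linear_orth_proj[OF W] Vn by (rule fin_dim_subspace_linear_image)
  have PU: "linear (orth_proj U)"
    using U by (rule linear_orth_proj)
  obtain G where G: "linear G" "\<And>y. G y \<in> Vn" "\<And>x. x \<in> Vn \<Longrightarrow> G (?P x) = x"
    using orth_proj_left_inverse_on[OF W _ I] Vn by (auto simp: fin_dim_subspace_def)
  \<comment> \<open>\<open>c + H w\<close> is the point of \<open>Vn\<close> whose image under \<open>P\<close> is the projection of \<open>w - P ubar\<close> onto \<open>P ` Vn\<close>.\<close>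
  define c where "c = - G (orth_proj U (?P ubar))"
  define H where "H = G \<circ> orth_proj U"
  have X: "c + H w = G (orth_proj U (w - ?P ubar))" for w
    by (simp add: c_def H_def linear_diff[OF PU] linear_diff[OF G(1)])
  have opt: "w - ?P ubar - ?P (c + H w) \<in> U\<^sup>\<bottom>" for w
  proof -
    obtain y where "y \<in> Vn" "orth_proj U (w - ?P ubar) = ?P y"
      using orth_proj_in[OF U] unfolding U_def by blast
    then have "?P (c + H w) = orth_proj U (w - ?P ubar)"
      by (simp add: X G(3))
    then show ?thesis
      using orth_proj_residual[OF U, of "w - ?P ubar"] by simp
  qed
  have in_Vn: "c + H w \<in> Vn" for w
    by (simp only: X G(2))
  have "linear H"
    unfolding H_def using PU G(1) by (rule linear_compose)
  from this in_Vn opt[unfolded U_def] show ?thesis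
    by (rule that)
qed

lemma affine_pbdw_is_affine_orthogonal_correction:
  fixes W Vn :: "'a::real_inner set"
  assumes W: "fin_dim_subspace W" and Vn: "fin_dim_subspace Vn" and I: "Vn \<inter> W\<^sup>\<bottom> = {0}"
  obtains B where "affine_map_on W B" "\<And>w. w \<in> W \<Longrightarrow> B w \<in> W\<^sup>\<bottom>"
    "\<And>w. w \<in> W \<Longrightarrow> affine_pbdw W ubar Vn w = w + B w"
proof -
  let ?P = "orth_proj W"
  have P: "linear ?P"
    using W by (rule linear_orth_proj)
  obtain c H where H: "linear H" "\<And>w. c + H w \<in> Vn"
    "\<And>w. w - ?P ubar - ?P (c + H w) \<in> (?P ` Vn)\<^sup>\<bottom>"
    by (rule affine_pbdw_coefficient[OF W Vn I, where ubar = ubar]) blast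
  define B where "B w = ubar + (c + H w) - ?P (ubar + (c + H w))" for w
  have B_eq: "B = (\<lambda>w. (ubar + c - ?P (ubar + c)) + (H w - ?P (H w)))"
    by (rule ext) (simp add: B_def linear_add[OF P] algebra_simps)
  have "linear (\<lambda>w. H w - ?P (H w))"
    by (rule linearI) (simp_all add: linear_add[OF H(1)] linear_scale[OF H(1)]
        linear_add[OF P] linear_scale[OF P] scaleR_diff_right)
  then have "affine_map_on W B"
    unfolding B_eq by (rule affine_map_on_linear_plus_const)
  moreover have "B w \<in> W\<^sup>\<bottom>" for w
    unfolding B_def by (rule orth_proj_residual[OF W])
  moreover have "affine_pbdw W ubar Vn w = w + B w" if "w \<in> W" for w
    unfolding B_def using affine_pbdw_eq_projection_formula[OF W Vn I that H(2,3)] .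
  ultimately show ?thesis
    using that by blast
qed

theorem mainTheorem1:
  fixes W :: "'a::{real_inner, complete_space} set"
    and A :: "'a \<Rightarrow> 'a"
  assumes W: "fin_dim_subspace W"
  shows "(\<exists>B :: 'a \<Rightarrow> 'a. affine_map_on W B \<and> (\<forall>w\<in>W. B w \<in> W\<^sup>\<bottom>)
            \<and> (\<forall>w\<in>W. A w = w + B w))
     \<longleftrightarrow> (\<exists>ubar :: 'a. \<exists>Vn :: 'a set. fin_dim_subspace Vn \<and> dim Vn \<le> dim W
            \<and> Vn \<inter> W\<^sup>\<bottom> = {0}
            \<and> (\<forall>w\<in>W. A w = affine_pbdw W ubar Vn w))"
    (is "?correction \<longleftrightarrow> ?pbdw")
proof
  assume ?correction
  then obtain B where B: "affine_map_on W B" "\<forall>w\<in>W. B w \<in> W\<^sup>\<bottom>" "\<forall>w\<in>W. A w = w + B w"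
    by blast
  obtain Vn where "fin_dim_subspace Vn" "dim Vn \<le> dim W" "Vn \<inter> W\<^sup>\<bottom> = {0}"
    "\<And>w. w \<in> W \<Longrightarrow> affine_pbdw W (B 0) Vn w = w + B w"
    using affine_orthogonal_correction_is_affine_pbdw[OF W B(1)] B(2) by blast
  then show ?pbdw
    using B(3) by metis
next
  assume ?pbdw
  then obtain ubar Vn where Vn: "fin_dim_subspace Vn" "Vn \<inter> W\<^sup>\<bottom> = {0}"
    "\<forall>w\<in>W. A w = affine_pbdw W ubar Vn w"
    by blast
  obtain B where "affine_map_on W B" "\<And>w. w \<in> W \<Longrightarrow> B w \<in> W\<^sup>\<bottom>"
    "\<And>w. w \<in> W \<Longrightarrow> affine_pbdw W ubar Vn w = w + B w"
    using affine_pbdw_is_affine_orthogonal_correction[OF W Vn(1,2)] by blast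
  then show ?correction
    using Vn(3) by metis
qed

end
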